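(* Let $\mathcal A=\sum_{\alpha\in I_N}\langle\mathbf A_\alpha(\mathbf k,\mathbf x_\alpha)\cdot\rangle_\alpha$ be an operator on $L^2([0,1)^N,\mathbb C^M)$ with $h$-staircase $M\times M$ matrix coefficients $\mathbf A_\alpha$. If $\mathcal A=0$ then $\mathbf A_\alpha=0$ for all $\alpha\in I_N$; i.e. the representation of an operator in this form is unique.
   Context: Let $N,M,p$ be positive integers and $h=1/p$. $I_N$ is the set of all subsets of $\{1,\dots,N\}$; for $\alpha\in I_N$, $|\alpha|$ is its cardinality and $\bar\alpha$ its complement. For $\mathbf x=(x_i)$, $\mathbf x_\alpha=(x_i)_{i\in\alpha}\in[0,1)^{|\alpha|}$ (increasing indices). For disjoint $\alpha,\beta$, $\mathbf y_\beta\diamond\mathbf x_\alpha=\mathbf z_{\alpha\cup\beta}$ with $z_i=x_i$ for $i\in\alpha$, $z_i=y_i$ for $i\in\beta$. $\langle f\rangle_\alpha=\int_{[0,1)^{|\alpha|}}f\,d\mathbf x_\alpha$, $\langle f\rangle_\emptyset=f$. $\chi^h_i$ is the indicator of $[i/p,(i+1)/p)$; a function on $[0,1)^R$ is $h$-staircase if it is a finite linear combination of $\prod_{j=1}^R\chi^h_{i_j}(y_j)$, a matrix function is $h$-staircase if all entries are. For an $h$-staircase $\mathbf A(\mathbf k,\mathbf x_\alpha)$ on $[0,1)^N\times[0,1)^{|\alpha|}$, $\langle\mathbf A(\mathbf k,\mathbf x_\alpha)\cdot\rangle_\alpha$ denotes the operator $\mathbf u\mapsto\langle\mathbf A(\mathbf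 k,\mathbf x_\alpha)\mathbf u(\mathbf k_{\bar\alpha}\diamond\mathbf x_\alpha)\rangle_\alpha$ (multiplication by $\mathbf A(\mathbf k)$ if $\alpha=\emptyset$). *)

theory Defs
  imports "HOL-Analysis.Analysis"
begin

text \<open>Coordinates are indexed by 0..N-1 (instead of 1..N); points of [0,1)^I are
  extensional functions nat => real, i.e. elements of PiE I (%_. {0..<1}).\<close>

definition cube :: "nat set \<Rightarrow> (nat \<Rightarrow> real) set" where
  "cube I = PiE I (\<lambda>_. {0..<1})"

definition unitI :: "real measure" where
  "unitI = restrict_space lborel {0..<1}"

definition cubeM :: "nat set \<Rightarrow> (nat \<Rightarrow> real) measure" where
  "cubeM I = PiM I (\<lambda>_. unitI)"

text \<open>chi^h_i, the indicator of [i/p,(i+1)/p), h = 1/p.\<close>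
definition chi :: "nat \<Rightarrow> nat \<Rightarrow> real \<Rightarrow> complex" where
  "chi p i y = (if real i / real p \<le> y \<and> y < (real i + 1) / real p then 1 else 0)"

definition diamond :: "nat set \<Rightarrow> (nat \<Rightarrow> real) \<Rightarrow> (nat \<Rightarrow> real) \<Rightarrow> (nat \<Rightarrow> real)" where
  "diamond \<alpha> y x = (\<lambda>i. if i \<in> \<alpha> then x i else y i)"

definition staircase_fun ::
  "nat \<Rightarrow> nat \<Rightarrow> nat set \<Rightarrow> ((nat \<Rightarrow> real) \<Rightarrow> (nat \<Rightarrow> real) \<Rightarrow> complex) \<Rightarrow> bool" where
  "staircase_fun p N \<alpha> f \<longleftrightarrow>
     (\<exists>C :: ((nat \<Rightarrow> nat) \<times> (nat \<Rightarrow> nat)) set. \<exists>a. finite C \<and>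
        (\<forall>k \<in> cube {..<N}. \<forall>x \<in> cube \<alpha>.
           f k x = (\<Sum>(c, d) \<in> C. a (c, d) * (\<Prod>j<N. chi p (c j) (k j))
                                             * (\<Prod>j\<in>\<alpha>. chi p (d j) (x j)))))"

definition staircase_mat ::
  "nat \<Rightarrow> nat \<Rightarrow> nat set \<Rightarrow> ((nat \<Rightarrow> real) \<Rightarrow> (nat \<Rightarrow> real) \<Rightarrow> complex ^ 'm ^ 'm) \<Rightarrow> bool" where
  "staircase_mat p N \<alpha> A \<longleftrightarrow> (\<forall>r s. staircase_fun p N \<alpha> (\<lambda>k x. A k x $ r $ s))"

text \<open>The operator < A(k, x_alpha) . >_alpha applied to u, evaluated at k.
  For alpha = {} the integral over the one-point space cubeM {} is evaluation,
  giving multiplication by A(k).\<close>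
definition avg_op ::
  "nat set \<Rightarrow> ((nat \<Rightarrow> real) \<Rightarrow> (nat \<Rightarrow> real) \<Rightarrow> complex ^ 'm ^ 'm)
    \<Rightarrow> ((nat \<Rightarrow> real) \<Rightarrow> complex ^ 'm) \<Rightarrow> (nat \<Rightarrow> real) \<Rightarrow> complex ^ 'm" where
  "avg_op \<alpha> A u k = (\<integral>x. (A k x *v u (diamond \<alpha> k x)) \<partial>cubeM \<alpha>)"

definition L2 :: "nat \<Rightarrow> ((nat \<Rightarrow> real) \<Rightarrow> complex ^ 'm) \<Rightarrow> bool" where
  "L2 N u \<longleftrightarrow> u \<in> borel_measurable (cubeM {..<N}) \<and>
               integrable (cubeM {..<N}) (\<lambda>k. (norm (u k))\<^sup>2)"

end

theory Submission
  imports Defs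
begin

text \<open>Downward induction on \<open>\<alpha>\<close>: assume every \<open>A \<beta>\<close> with \<open>\<beta> \<supset> \<alpha>\<close> vanishes and fix
  \<open>k\<^sub>0, x\<^sub>0\<close>. On the grid of mesh \<open>h/2\<close> take the box that, in the coordinates of \<open>\<alpha>\<close>,
  lies in the odd half-cell of the \<open>h\<close>-cell of \<open>x\<^sub>0\<close> and, in the other coordinates, in
  the even half-cell of the \<open>h\<close>-cell of \<open>k\<^sub>0\<close>; test the operator on its indicator times a
  vector \<open>v\<close> and evaluate at a point \<open>k\<close> of the even box around \<open>k\<^sub>0\<close> (a set of positive
  measure, so the a.e. identity holds at some such \<open>k\<close>). For \<open>\<beta> \<not>\<supseteq> \<alpha>\<close> the
  coordinate of \<open>k\<close> frozen in \<open>\<alpha> - \<beta>\<close> lies in the wrong half-cell, so the test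
  function vanishes along the integration; the terms with \<open>\<beta> \<supset> \<alpha>\<close> vanish by induction;
  and since \<open>A \<alpha>\<close> is constant on \<open>h\<close>-cells, the \<open>\<alpha>\<close>-term is the volume of the box times
  \<open>A \<alpha> k\<^sub>0 x\<^sub>0 *v v\<close>. Hence \<open>A \<alpha> k\<^sub>0 x\<^sub>0 *v v = 0\<close> for all \<open>v\<close>.\<close>

lemma finite_measure_unitI: "finite_measure unitI"
  unfolding unitI_def by (intro finite_measureI) (simp add: space_restrict_space emeasure_restrict_space)

interpretation unitI: product_sigma_finite "\<lambda>_. unitI"
  unfolding product_sigma_finite_def
  using finite_measure_unitI by (simp add: finite_measure_def)

lemma space_cubeM: "space (cubeM S) = cube S"
  by (simp add: cubeM_def cube_def space_PiM unitI_def space_restrict_space)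

lemma cube_coordinate_range: "k \<in> cube S \<Longrightarrow> j \<in> S \<Longrightarrow> 0 \<le> k j \<and> k j < 1"
  unfolding cube_def by (auto dest: PiE_mem)

lemma AE_obtain_in_nonnull:
  assumes "AE x in M. P x" "B \<in> sets M" "emeasure M B \<noteq> 0"
  obtains x where "x \<in> B" "P x"
proof -
  have "\<not> (AE x in M. x \<notin> B)"
    using assms(2,3) null_setsD1 by (simp flip: AE_iff_null_sets) blast
  moreover have "AE x in M. x \<notin> B" if "\<nexists>x. x \<in> B \<and> P x"
    using assms(1) by eventually_elim (use that in blast)
  ultimately show thesis
    using that by blast
qed

definition cell :: "nat \<Rightarrow> nat \<Rightarrow> real set" where
  "cell q c = {real c / real q ..< (real c + 1) / real q}"

lemma mem_cell_iff_floor: "q > 0 \<Longrightarrow> y \<in> cell q c \<longleftrightarrow> \<lfloor>real q * y\<rfloor> = int c"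
  unfolding cell_def by (simp add: floor_eq_iff field_simps)

lemma mem_cell_unique: "q > 0 \<Longrightarrow> y \<in> cell q c \<Longrightarrow> y \<in> cell q c' \<Longrightarrow> c = c'"
  by (simp add: mem_cell_iff_floor)

lemma chi_eq_floor: "p > 0 \<Longrightarrow> chi p c y = (if \<lfloor>real p * y\<rfloor> = int c then 1 else 0)"
  using mem_cell_iff_floor[of p y c] unfolding chi_def cell_def by simp

lemma cell_subset_unit: "c < q \<Longrightarrow> cell q c \<subseteq> {0..<1}"
  unfolding cell_def by (auto simp: field_simps)

lemma emeasure_unitI_cell:
  assumes "c < q" shows "emeasure unitI (cell q c) = ennreal (1 / real q)"
proof -
  have "real c / real q \<le> (real c + 1) / real q"
    by (simp add: divide_right_mono)
  with cell_subset_unit[OF assms] show ?thesis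
    by (simp add: unitI_def emeasure_restrict_space cell_def diff_divide_distrib[symmetric])
qed

lemma sets_unitI_cell: "c < q \<Longrightarrow> cell q c \<in> sets unitI"
  using cell_subset_unit[of c q] by (simp add: unitI_def sets_restrict_space_iff cell_def)

lemma floor_mult_if_mem_refined_cell:
  assumes "n > 0" "q > 0" "y \<in> cell (n * q) c"
  shows "\<lfloor>real q * y\<rfloor> = int (c div n)"
proof -
  have "real q * y = real (n * q) * y / real_of_int (int n)"
    using assms(1) by simp
  then have "\<lfloor>real q * y\<rfloor> = \<lfloor>real (n * q) * y\<rfloor> div int n"
    by (simp only: floor_divide_real_eq_div[OF of_nat_0_le_iff])
  also have "\<dots> = int (c div n)"
    using assms by (simp add: mem_cell_iff_floor zdiv_int)
  finally show ?thesis .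
qed

lemma nat_floor_mult_less:
  assumes "q > 0" "y < 1" shows "nat \<lfloor>real q * y\<rfloor> < q"
proof -
  have "\<lfloor>real q * y\<rfloor> < int q"
    using assms by (simp add: floor_less_iff)
  then show ?thesis
    using assms(1) by linarith
qed

definition grid_box :: "nat set \<Rightarrow> nat \<Rightarrow> (nat \<Rightarrow> nat) \<Rightarrow> (nat \<Rightarrow> real) set" where
  "grid_box S q c = PiE S (\<lambda>j. cell q (c j))"

lemma grid_box_subset_cube: "(\<And>j. j \<in> S \<Longrightarrow> c j < q) \<Longrightarrow> grid_box S q c \<subseteq> cube S"
  unfolding grid_box_def cube_def by (intro PiE_mono) (simp add: cell_subset_unit)

lemma sets_grid_box:
  "finite S \<Longrightarrow> (\<And>j. j \<in> S \<Longrightarrow> c j < q) \<Longrightarrow> grid_box S q c \<in> sets (cubeM S)"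
  unfolding grid_box_def cubeM_def by (intro sets_PiM_I_finite) (simp_all add: sets_unitI_cell)

lemma emeasure_grid_box:
  assumes "finite S" "\<And>j. j \<in> S \<Longrightarrow> c j < q"
  shows "emeasure (cubeM S) (grid_box S q c) = ennreal ((1 / real q) ^ card S)"
proof -
  have "emeasure (cubeM S) (grid_box S q c) = (\<Prod>j\<in>S. emeasure unitI (cell q (c j)))"
    unfolding grid_box_def cubeM_def using assms by (intro unitI.emeasure_PiM) (simp_all add: sets_unitI_cell)
  also have "\<dots> = (\<Prod>j\<in>S. ennreal (1 / real q))"
    using assms(2) by (simp add: emeasure_unitI_cell)
  finally show ?thesis
    by (simp add: ennreal_power)
qed

lemma measure_grid_box_pos:
  assumes "q > 0" "finite S" "\<And>j. j \<in> S \<Longrightarrow> c j < q"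
  shows "measure (cubeM S) (grid_box S q c) > 0"
  using emeasure_grid_box[OF assms(2,3)] assms(1) by (simp add: measure_def)

lemma staircase_fun_cellwise_constant:
  assumes "p > 0" "staircase_fun p N \<alpha> f"
    and "k \<in> cube {..<N}" "k' \<in> cube {..<N}" "x \<in> cube \<alpha>" "x' \<in> cube \<alpha>"
    and "\<And>j. j < N \<Longrightarrow> \<lfloor>real p * k j\<rfloor> = \<lfloor>real p * k' j\<rfloor>"
    and "\<And>j. j \<in> \<alpha> \<Longrightarrow> \<lfloor>real p * x j\<rfloor> = \<lfloor>real p * x' j\<rfloor>"
  shows "f k x = f k' x'"
proof -
  obtain C a where "\<forall>k \<in> cube {..<N}. \<forall>x \<in> cube \<alpha>.
      f k x = (\<Sum>(c, d) \<in> C. a (c, d) * (\<Prod>j<N. chi p (c j) (k j)) * (\<Prod>j\<in>\<alpha>. chi p (d j) (x j)))"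
    using assms(2) unfolding staircase_fun_def by blast
  with assms(3-) show ?thesis
    by (simp add: chi_eq_floor[OF \<open>p > 0\<close>])
qed

lemma staircase_mat_cellwise_constant:
  assumes "p > 0" "staircase_mat p N \<alpha> A"
    and "k \<in> cube {..<N}" "k' \<in> cube {..<N}" "x \<in> cube \<alpha>" "x' \<in> cube \<alpha>"
    and "\<And>j. j < N \<Longrightarrow> \<lfloor>real p * k j\<rfloor> = \<lfloor>real p * k' j\<rfloor>"
    and "\<And>j. j \<in> \<alpha> \<Longrightarrow> \<lfloor>real p * x j\<rfloor> = \<lfloor>real p * x' j\<rfloor>"
  shows "A k x = A k' x'"
proof -
  have "A k x $ r $ s = A k' x' $ r $ s" for r s
    using assms(2) unfolding staircase_mat_def
    by (intro staircase_fun_cellwise_constant[OF assms(1) _ assms(3-)]) simp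
  then show ?thesis
    by (simp add: vec_eq_iff)
qed

lemma L2_indicator_scaleR:
  assumes "E \<in> sets (cubeM {..<N})" "emeasure (cubeM {..<N}) E < \<infinity>"
  shows "L2 N (\<lambda>y. indicator E y *\<^sub>R v)"
proof -
  have "(\<lambda>k. (norm (indicator E k *\<^sub>R v))\<^sup>2) = (\<lambda>k. indicator E k * (norm v)\<^sup>2)"
    by (auto simp: indicator_def)
  then show ?thesis
    unfolding L2_def using assms by (simp add: integrable_mult_left)
qed

lemma diamond_in_PiE_iff:
  assumes "k \<in> cube {..<N}" "\<beta> \<subseteq> {..<N}"
  shows "diamond \<beta> k x \<in> PiE {..<N} I \<longleftrightarrow>
           (\<forall>j\<in>\<beta>. x j \<in> I j) \<and> (\<forall>j<N. j \<notin> \<beta> \<longrightarrow> k j \<in> I j)"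
  using assms unfolding diamond_def cube_def PiE_iff extensional_def by auto

lemma avg_op_eq_0_if_coefficient_vanishes:
  assumes "\<And>x. x \<in> cube \<beta> \<Longrightarrow> B k x = 0"
  shows "avg_op \<beta> B u k = 0"
proof -
  have "avg_op \<beta> B u k = (\<integral>x. 0 \<partial>cubeM \<beta>)"
    unfolding avg_op_def
    by (rule Bochner_Integration.integral_cong) (simp_all add: assms space_cubeM)
  then show ?thesis
    by simp
qed

lemma avg_op_eq_0_if_frozen_coordinate_outside:
  assumes "\<And>y. y \<notin> PiE {..<N} I \<Longrightarrow> u y = 0" "j < N" "j \<notin> \<beta>" "k j \<notin> I j"
  shows "avg_op \<beta> B u k = 0"
proof -
  have "diamond \<beta> k x \<notin> PiE {..<N} I" for x
  proof
    assume "diamond \<beta> k x \<in> PiE {..<N} I"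
    then have "diamond \<beta> k x j \<in> I j"
      using assms(2) by (simp add: PiE_mem)
    with assms(3,4) show False
      by (simp add: diamond_def)
  qed
  then show ?thesis
    unfolding avg_op_def by (simp add: assms(1))
qed

lemma avg_op_indicator_scaleR:
  assumes "D \<in> sets (cubeM \<alpha>)" "emeasure (cubeM \<alpha>) D < \<infinity>"
    and "\<And>x. x \<in> cube \<alpha> \<Longrightarrow> diamond \<alpha> k x \<in> E \<longleftrightarrow> x \<in> D"
    and "\<And>x. x \<in> D \<Longrightarrow> B k x = C"
  shows "avg_op \<alpha> B (\<lambda>y. indicator E y *\<^sub>R v) k = measure (cubeM \<alpha>) D *\<^sub>R (C *v v)"
proof -
  have "avg_op \<alpha> B (\<lambda>y. indicator E y *\<^sub>R v) k = (\<integral>x. indicator D x *\<^sub>R (C *v v) \<partial>cubeM \<alpha>)"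
    unfolding avg_op_def using assms(3,4)
    by (intro Bochner_Integration.integral_cong)
       (auto simp: space_cubeM indicator_def matrix_vector_mult_scaleR)
  with assms(1,2) show ?thesis
    by (simp add: integrable_real_indicator sets.Int_space_eq2)
qed

lemma sum_avg_op_eq_single:
  fixes A :: "nat set \<Rightarrow> (nat \<Rightarrow> real) \<Rightarrow> (nat \<Rightarrow> real) \<Rightarrow> complex ^ 'm ^ 'm"
  assumes "\<alpha> \<subseteq> {..<N}"
    and "\<And>\<beta> x. \<alpha> \<subset> \<beta> \<Longrightarrow> \<beta> \<subseteq> {..<N} \<Longrightarrow> x \<in> cube \<beta> \<Longrightarrow> A \<beta> k x = 0"
    and "\<And>y. y \<notin> PiE {..<N} I \<Longrightarrow> u y = 0" "\<And>j. j \<in> \<alpha> \<Longrightarrow> k j \<notin> I j"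
  shows "(\<Sum>\<beta> \<in> Pow {..<N}. avg_op \<beta> (A \<beta>) u k) = avg_op \<alpha> (A \<alpha>) u k"
proof -
  have "avg_op \<beta> (A \<beta>) u k = 0" if "\<beta> \<subseteq> {..<N}" "\<beta> \<noteq> \<alpha>" for \<beta>
  proof (cases "\<alpha> \<subseteq> \<beta>")
    case True
    with that assms(2) show ?thesis
      by (intro avg_op_eq_0_if_coefficient_vanishes) auto
  next
    case False
    then obtain j where "j \<in> \<alpha>" "j \<notin> \<beta>" by blast
    moreover from this have "j < N"
      using assms(1) by auto
    ultimately show ?thesis
      using avg_op_eq_0_if_frozen_coordinate_outside assms(3,4) by blast
  qed
  with assms(1) show ?thesis
    by (subst sum.remove[of _ \<alpha>]) auto
qed

text \<open>On the grid of mesh \<open>1/(2p)\<close>: the lower (\<open>b = 0\<close>) or upper (\<open>b = 1\<close>) half of the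
  cell of mesh \<open>1/p\<close> containing \<open>y\<close>.\<close>
definition half_index :: "nat \<Rightarrow> real \<Rightarrow> nat \<Rightarrow> nat" where
  "half_index p y b = 2 * nat \<lfloor>real p * y\<rfloor> + b"

lemma half_index_less: "p > 0 \<Longrightarrow> y < 1 \<Longrightarrow> b < 2 \<Longrightarrow> half_index p y b < 2 * p"
  using nat_floor_mult_less[of p y] unfolding half_index_def by linarith

lemma floor_mult_eq_if_mem_half_cell:
  assumes "p > 0" "0 \<le> y0" "b < 2" "y \<in> cell (2 * p) (half_index p y0 b)"
  shows "\<lfloor>real p * y\<rfloor> = \<lfloor>real p * y0\<rfloor>"
proof -
  have "\<lfloor>real p * y\<rfloor> = int (half_index p y0 b div 2)"
    using floor_mult_if_mem_refined_cell[of 2 p] assms(1,4) by simp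
  also have "half_index p y0 b div 2 = nat \<lfloor>real p * y0\<rfloor>"
    using assms(3) unfolding half_index_def by simp
  finally show ?thesis
    using assms(1,2) by simp
qed

lemma lower_upper_half_cells_disjoint:
  assumes "p > 0" "y \<in> cell (2 * p) (half_index p y0 0)"
  shows "y \<notin> cell (2 * p) (half_index p y1 1)"
proof
  assume "y \<in> cell (2 * p) (half_index p y1 1)"
  with assms have "half_index p y0 0 = half_index p y1 1"
    by (intro mem_cell_unique[of "2 * p" y]) simp_all
  then show False
    by (simp add: half_index_def double_not_eq_Suc_double)
qed

definition test_index :: "nat \<Rightarrow> nat set \<Rightarrow> (nat \<Rightarrow> real) \<Rightarrow> (nat \<Rightarrow> real) \<Rightarrow> nat \<Rightarrow> nat" where
  "test_index p \<alpha> k0 x0 j = (if j \<in> \<alpha> then half_index p (x0 j) 1 else half_index p (k0 j) 0)"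

lemma test_index_less:
  assumes "p > 0" "\<alpha> \<subseteq> {..<N}" "k0 \<in> cube {..<N}" "x0 \<in> cube \<alpha>" "j < N"
  shows "test_index p \<alpha> k0 x0 j < 2 * p"
proof (cases "j \<in> \<alpha>")
  case True
  then show ?thesis
    using half_index_less[OF assms(1)] cube_coordinate_range[OF assms(4) True]
    unfolding test_index_def by simp
next
  case False
  then show ?thesis
    using half_index_less[OF assms(1)] cube_coordinate_range[OF assms(3), of j] assms(5)
    unfolding test_index_def by simp
qed

lemma avg_op_test_box:
  assumes p: "p > 0" and \<alpha>: "\<alpha> \<subseteq> {..<N}" and stair: "staircase_mat p N \<alpha> B"
    and k0: "k0 \<in> cube {..<N}" and x0: "x0 \<in> cube \<alpha>" and k: "k \<in> cube {..<N}"
    and k_cells: "\<And>j. j < N \<Longrightarrow> k j \<in> cell (2 * p) (half_index p (k0 j) 0)"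
  defines "d \<equiv> test_index p \<alpha> k0 x0"
  shows "avg_op \<alpha> B (\<lambda>y. indicator (grid_box {..<N} (2 * p) d) y *\<^sub>R v) k =
           measure (cubeM \<alpha>) (grid_box \<alpha> (2 * p) d) *\<^sub>R (B k0 x0 *v v)"
proof (rule avg_op_indicator_scaleR)
  have fin: "finite \<alpha>"
    using \<alpha> finite_subset by blast
  have d_less: "d j < 2 * p" if "j \<in> \<alpha>" for j
    using test_index_less[OF p \<alpha> k0 x0] subsetD[OF \<alpha> that] unfolding d_def by simp
  show "grid_box \<alpha> (2 * p) d \<in> sets (cubeM \<alpha>)"
    "emeasure (cubeM \<alpha>) (grid_box \<alpha> (2 * p) d) < \<infinity>"
    using sets_grid_box[OF fin d_less] emeasure_grid_box[OF fin d_less] by simp_all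
  show "diamond \<alpha> k x \<in> grid_box {..<N} (2 * p) d \<longleftrightarrow> x \<in> grid_box \<alpha> (2 * p) d"
    if "x \<in> cube \<alpha>" for x
  proof -
    have "x \<in> grid_box \<alpha> (2 * p) d \<longleftrightarrow> (\<forall>j\<in>\<alpha>. x j \<in> cell (2 * p) (d j))"
      using that unfolding grid_box_def cube_def by (auto simp: PiE_iff)
    moreover have "\<forall>j<N. j \<notin> \<alpha> \<longrightarrow> k j \<in> cell (2 * p) (d j)"
      using k_cells unfolding d_def test_index_def by simp
    ultimately show ?thesis
      using diamond_in_PiE_iff[OF k \<alpha>] unfolding grid_box_def by simp
  qed
  show "B k x = B k0 x0" if x: "x \<in> grid_box \<alpha> (2 * p) d" for x
  proof -
    have x_cube: "x \<in> cube \<alpha>"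
      using subsetD[OF grid_box_subset_cube x] d_less by blast
    have floor_k: "\<lfloor>real p * k j\<rfloor> = \<lfloor>real p * k0 j\<rfloor>" if "j < N" for j
      using floor_mult_eq_if_mem_half_cell[OF p _ _ k_cells[OF that]]
        cube_coordinate_range[OF k0, of j] that by simp
    have floor_x: "\<lfloor>real p * x j\<rfloor> = \<lfloor>real p * x0 j\<rfloor>" if "j \<in> \<alpha>" for j
      using floor_mult_eq_if_mem_half_cell[OF p, of "x0 j" 1 "x j"] PiE_mem[OF x[unfolded grid_box_def] that]
        cube_coordinate_range[OF x0 that] that unfolding d_def test_index_def by simp
    show ?thesis
      by (rule staircase_mat_cellwise_constant[OF p stair k k0 x_cube x0 floor_k floor_x])
  qed
qed

lemma staircase_coefficient_eq_0_if_larger_eq_0: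
  fixes A :: "nat set \<Rightarrow> (nat \<Rightarrow> real) \<Rightarrow> (nat \<Rightarrow> real) \<Rightarrow> complex ^ 'm ^ 'm"
  assumes p: "p > 0" and \<alpha>: "\<alpha> \<subseteq> {..<N}" and stair: "staircase_mat p N \<alpha> (A \<alpha>)"
    and zero: "\<And>u :: (nat \<Rightarrow> real) \<Rightarrow> complex ^ 'm. L2 N u \<Longrightarrow>
                 AE k in cubeM {..<N}. (\<Sum>\<beta> \<in> Pow {..<N}. avg_op \<beta> (A \<beta>) u k) = 0"
    and larger: "\<And>\<beta> k x. \<alpha> \<subset> \<beta> \<Longrightarrow> \<beta> \<subseteq> {..<N} \<Longrightarrow> k \<in> cube {..<N} \<Longrightarrow> x \<in> cube \<beta> \<Longrightarrow>
                   A \<beta> k x = 0"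
    and k0: "k0 \<in> cube {..<N}" and x0: "x0 \<in> cube \<alpha>"
  shows "A \<alpha> k0 x0 *v v = 0"
proof -
  define d where "d = test_index p \<alpha> k0 x0"
  define e where "e j = half_index p (k0 j) 0" for j
  define u where "u y = indicator (grid_box {..<N} (2 * p) d) y *\<^sub>R v" for y
  have fin: "finite \<alpha>"
    using \<alpha> finite_subset by blast
  have d_less: "d j < 2 * p" if "j \<in> {..<N}" for j
    using test_index_less[OF p \<alpha> k0 x0] that unfolding d_def by simp
  have e_less: "e j < 2 * p" if "j \<in> {..<N}" for j
    using half_index_less[OF p] cube_coordinate_range[OF k0 that] unfolding e_def by simp
  have "L2 N u"
    unfolding u_def
    using sets_grid_box[OF finite_lessThan d_less] emeasure_grid_box[OF finite_lessThan d_less]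
    by (intro L2_indicator_scaleR) simp_all
  moreover have "grid_box {..<N} (2 * p) e \<in> sets (cubeM {..<N})"
    by (rule sets_grid_box[OF finite_lessThan e_less])
  moreover have "emeasure (cubeM {..<N}) (grid_box {..<N} (2 * p) e) \<noteq> 0"
    using emeasure_grid_box[OF finite_lessThan e_less] p by simp
  ultimately obtain k where k_box: "k \<in> grid_box {..<N} (2 * p) e"
    and k_zero: "(\<Sum>\<beta> \<in> Pow {..<N}. avg_op \<beta> (A \<beta>) u k) = 0"
    by (rule AE_obtain_in_nonnull[OF zero])
  have k: "k \<in> cube {..<N}"
    using subsetD[OF grid_box_subset_cube k_box] e_less by blast
  have k_cells: "k j \<in> cell (2 * p) (half_index p (k0 j) 0)" if "j < N" for j
    using PiE_mem[OF k_box[unfolded grid_box_def], of j] that unfolding e_def by simp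
  have "(\<Sum>\<beta> \<in> Pow {..<N}. avg_op \<beta> (A \<beta>) u k) = avg_op \<alpha> (A \<alpha>) u k"
  proof (rule sum_avg_op_eq_single[OF \<alpha>, where I = "\<lambda>j. cell (2 * p) (d j)"])
    show "A \<beta> k x = 0" if "\<alpha> \<subset> \<beta>" "\<beta> \<subseteq> {..<N}" "x \<in> cube \<beta>" for \<beta> x
      using larger[OF that(1,2) k that(3)] .
    show "u y = 0" if "y \<notin> PiE {..<N} (\<lambda>j. cell (2 * p) (d j))" for y
      using that unfolding u_def grid_box_def by simp
    show "k j \<notin> cell (2 * p) (d j)" if "j \<in> \<alpha>" for j
      using lower_upper_half_cells_disjoint[OF p k_cells, of j "x0 j"] subsetD[OF \<alpha> that] that
      unfolding d_def test_index_def by simp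
  qed
  also have "\<dots> = measure (cubeM \<alpha>) (grid_box \<alpha> (2 * p) d) *\<^sub>R (A \<alpha> k0 x0 *v v)"
    unfolding u_def d_def by (rule avg_op_test_box[OF p \<alpha> stair k0 x0 k k_cells])
  finally have "measure (cubeM \<alpha>) (grid_box \<alpha> (2 * p) d) *\<^sub>R (A \<alpha> k0 x0 *v v) = 0"
    using k_zero by simp
  moreover have "measure (cubeM \<alpha>) (grid_box \<alpha> (2 * p) d) > 0"
    using measure_grid_box_pos[OF _ fin, of "2 * p" d] d_less subsetD[OF \<alpha>] p by simp
  ultimately show ?thesis
    by simp
qed

lemma finite_subset_downward_induct[consumes 2, case_names step]:
  assumes "finite U" "\<alpha> \<subseteq> U"
    and step: "\<And>\<alpha>. \<alpha> \<subseteq> U \<Longrightarrow> (\<And>\<beta>. \<alpha> \<subset> \<beta> \<Longrightarrow> \<beta> \<subseteq> U \<Longrightarrow> P \<beta>) \<Longrightarrow> P \<alpha>"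
  shows "P \<alpha>"
  using assms(2)
proof (induction "card U - card \<alpha>" arbitrary: \<alpha> rule: less_induct)
  case less
  show ?case
  proof (rule step[OF less.prems])
    fix \<beta> assume "\<alpha> \<subset> \<beta>" "\<beta> \<subseteq> U"
    moreover from this have "card \<alpha> < card \<beta>" "card \<beta> \<le> card U"
      using assms(1) by (auto intro: psubset_card_mono card_mono finite_subset)
    ultimately show "P \<beta>"
      using less.hyps by simp
  qed
qed

theorem lemma1:
  fixes N p :: nat
    and A :: "nat set \<Rightarrow> (nat \<Rightarrow> real) \<Rightarrow> (nat \<Rightarrow> real) \<Rightarrow> complex ^ 'm ^ 'm"
  assumes "N > 0" and "p > 0"
    and stair: "\<And>\<alpha>. \<alpha> \<subseteq> {..<N} \<Longrightarrow> staircase_mat p N \<alpha> (A \<alpha>)"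
    and zero: "\<And>u :: (nat \<Rightarrow> real) \<Rightarrow> complex ^ 'm. L2 N u \<Longrightarrow>
                 AE k in cubeM {..<N}. (\<Sum>\<alpha> \<in> Pow {..<N}. avg_op \<alpha> (A \<alpha>) u k) = 0"
  shows "\<forall>\<alpha> \<subseteq> {..<N}. \<forall>k \<in> cube {..<N}. \<forall>x \<in> cube \<alpha>. A \<alpha> k x = 0"
proof (intro allI impI)
  fix \<alpha> assume "\<alpha> \<subseteq> {..<N}"
  with finite_lessThan[of N] show "\<forall>k \<in> cube {..<N}. \<forall>x \<in> cube \<alpha>. A \<alpha> k x = 0"
  proof (induction rule: finite_subset_downward_induct)
    case (step \<alpha>)
    have larger: "A \<beta> k x = 0"
      if "\<alpha> \<subset> \<beta>" "\<beta> \<subseteq> {..<N}" "k \<in> cube {..<N}" "x \<in> cube \<beta>" for \<beta> k x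
      using step.IH that by blast
    show ?case
    proof (intro ballI)
      fix k x assume "k \<in> cube {..<N}" "x \<in> cube \<alpha>"
      from staircase_coefficient_eq_0_if_larger_eq_0[OF \<open>p > 0\<close> step.hyps stair[OF step.hyps] zero
          larger this]
      show "A \<alpha> k x = 0"
        by (simp add: matrix_eq)
    qed
  qed
qed

end
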